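(* Let $\mathcal{M}\subseteq\mathbb{R}^d$ be a compact embedded $C^2$-submanifold without boundary with reach $\tau_{\mathcal{M}}>0$, let $f\in C^1(\mathbb{R}^d)$ with $\nabla f$ Lipschitz on $\mathcal{T}(\tau_{\mathcal{M}})$, set $C=\sup_{\mathcal{T}(\tau_{\mathcal{M}})}\|\nabla f\|$ and $L=\operatorname{Lip}(\nabla f|_{\mathcal{T}(\tau_{\mathcal{M}})})$, and let $\eta\ge0$. Let $\tau\in(0,\tau_{\mathcal{M}})$, $\epsilon>0$, and $s\in C^1(\mathbb{R}^d;\mathbb{R}^d)$ with $$\|s(x)-\pi(x)\|<\epsilon,\qquad\|s'(x)-P_0(x)\|<\epsilon\qquad\text{for all }x\in\mathcal{T}(\tau),$$ and suppose $s(\mathcal{T}(\tau))\subseteq\mathcal{T}(\tau)$. Let $\tilde\tau\in(0,\tau]$, $\delta>0$, and let $x_*\in\mathcal{T}(\tilde\tau)$ satisfy $\|G_s^\eta(x_* )\|\le\delta$, where $G_s^\eta(x)=s'(x)\nabla f(s(x))+\eta(x-s(x))$. Then $p_*=\pi(x_* )$ satisfies $$\|\operatorname{grad}_{\mathcal{M}}f(p_* )\|\le2(L+C+\eta)\epsilon+2\,\frac{\tilde\tau/\tau_{\mathcal{M}}}{1-\tilde\tau/\tau_{\mathcal{M}}}\,C+\delta.$$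
   Context: Reach $\tau_{\mathcal{M}}$: largest $\tau\ge0$ such that $(p,v)\mapsto p+v$ on $\{(p,v):p\in\mathcal{M},v\in N_p\mathcal{M},\|v\|<\tau\}$ is a diffeomorphism onto its image; $\mathcal{T}(\tau)=\{p+v:p\in\mathcal{M},v\in N_p\mathcal{M},\|v\|<\tau\}$; $\pi(x)$ is the unique closest point of $\mathcal{M}$ to $x$, $P_0(x)=\pi'(x)$ its Jacobian. $\operatorname{grad}_{\mathcal{M}}f(p)=P_{T_p\mathcal{M}}\nabla f(p)$ for $p\in\mathcal{M}$. *)

theory Defs
  imports "HOL-Analysis.Analysis"
begin

definition C1_on :: "'a::real_normed_vector set \<Rightarrow> ('a \<Rightarrow> 'b::real_normed_vector) \<Rightarrow> bool" where
  "C1_on U g \<longleftrightarrow> (\<exists>g'. (\<forall>x\<in>U. (g has_derivative blinfun_apply (g' x)) (at x)) \<and> continuous_on U g')"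

definition C2_on :: "'a::real_normed_vector set \<Rightarrow> ('a \<Rightarrow> 'b::real_normed_vector) \<Rightarrow> bool" where
  "C2_on U g \<longleftrightarrow> (\<exists>g'. (\<forall>x\<in>U. (g has_derivative blinfun_apply (g' x)) (at x)) \<and> C1_on U g')"

definition C2_submanifold :: "'a::euclidean_space set \<Rightarrow> bool" where
  "C2_submanifold M \<longleftrightarrow> (\<forall>p\<in>M. \<exists>U V (\<phi>::'a\<Rightarrow>'a) \<psi> E.
     open U \<and> p \<in> U \<and> open V \<and> homeomorphism U V \<phi> \<psi> \<and> C2_on U \<phi> \<and> C2_on V \<psi> \<and>
     subspace E \<and> \<phi> ` (M \<inter> U) = V \<inter> E)"

definition tangent_space :: "'a::euclidean_space set \<Rightarrow> 'a \<Rightarrow> 'a set" where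
  "tangent_space M p = {v. \<exists>\<gamma> e. e > 0 \<and> (\<forall>t\<in>{-e<..<e}. \<gamma> t \<in> M) \<and> \<gamma> 0 = p \<and>
      (\<gamma> has_vector_derivative v) (at 0)}"

definition normal_space :: "'a::euclidean_space set \<Rightarrow> 'a \<Rightarrow> 'a set" where
  "normal_space M p = {v. \<forall>w\<in>tangent_space M p. v \<bullet> w = 0}"

definition orth_proj :: "'a::euclidean_space set \<Rightarrow> 'a \<Rightarrow> 'a" where
  "orth_proj T g = (THE t. t \<in> T \<and> (\<forall>w\<in>T. (g - t) \<bullet> w = 0))"

definition normal_bundle :: "'a::euclidean_space set \<Rightarrow> real \<Rightarrow> ('a \<times> 'a) set" where
  "normal_bundle M r = {(p, v). p \<in> M \<and> v \<in> normal_space M p \<and> norm v < r}"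

definition tube :: "'a::euclidean_space set \<Rightarrow> real \<Rightarrow> 'a set" where
  "tube M r = (\<lambda>(p, v). p + v) ` normal_bundle M r"

text \<open>(p,v) |-> p+v is a (C^1) diffeomorphism of the radius-r normal bundle onto its image:
  injective, with open image, and with a C^1 inverse on the image.\<close>
definition reach_ok :: "'a::euclidean_space set \<Rightarrow> real \<Rightarrow> bool" where
  "reach_ok M r \<longleftrightarrow> inj_on (\<lambda>(p, v). p + v) (normal_bundle M r) \<and> open (tube M r) \<and>
     (\<exists>g. C1_on (tube M r) g \<and> (\<forall>z\<in>normal_bundle M r. g ((\<lambda>(p, v). p + v) z) = z))"

definition is_reach :: "'a::euclidean_space set \<Rightarrow> real \<Rightarrow> bool" where
  "is_reach M r \<longleftrightarrow> r \<ge> 0 \<and> reach_ok M r \<and> (\<forall>r'. r' \<ge> 0 \<and> reach_ok M r' \<longrightarrow> r' \<le> r)"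

definition closest_point :: "'a::euclidean_space set \<Rightarrow> 'a \<Rightarrow> 'a" where
  "closest_point M x = (THE p. p \<in> M \<and> (\<forall>q\<in>M. dist x p \<le> dist x q))"

definition manifold_grad :: "'a::euclidean_space set \<Rightarrow> ('a \<Rightarrow> 'a) \<Rightarrow> 'a \<Rightarrow> 'a" where
  "manifold_grad M gradf p = orth_proj (tangent_space M p) (gradf p)"

end

theory Submission
  imports Defs
begin

(*
  Let p = pi xs be the foot of xs, g = grad f p, t the tangential part of g (so t = grad_M f p)
  and B = D pi xs. Since xs - p is normal at p, |t|^2 = t . g can be expanded around
  G = s' xs (grad f (s xs)) + eta (xs - s xs), and every term is bounded by |t| times one of
  delta, eta eps, eps C or L eps, except (t - B t) . grad f (s xs).

  That term is controlled by the geometry of the tube. B is self-adjoint, because pi is the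
  gradient of z . pi z - |pi z|^2 / 2. It maps T_p M into itself, and Federer's reach
  inequality, applied to the feet of nearby points and passed to the limit, shows that B is
  injective on T_p M with | |B w|^2 - B w . w | <= rho |B w|^2, where rho = |xs - p| / tM.
  Hence the eigenvalues of B on T_p M lie in [1/(1+rho), 1/(1-rho)], and
  |B t - t| <= rho/(1-rho) |t| <= (taut/tM)/(1 - taut/tM) |t|.
*)

lemma normal_space_subspace: "subspace (normal_space M p)"
  unfolding subspace_def normal_space_def by (auto simp: inner_add_left)

lemma orth_proj_spec:
  fixes T :: "'a::euclidean_space set"
  assumes T: "subspace T"
  shows "orth_proj T g \<in> T" "\<And>w. w \<in> T \<Longrightarrow> (g - orth_proj T g) \<bullet> w = 0"
proof -
  have "span T = T" using T by simp
  then obtain y z where "y \<in> T" "\<And>w. w \<in> T \<Longrightarrow> orthogonal z w" "g = y + z"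
    using orthogonal_subspace_decomp_exists[of T g] by metis
  then have y_proj: "y \<in> T \<and> (\<forall>w\<in>T. (g - y) \<bullet> w = 0)" by (auto simp: orthogonal_def)
  have unique: "t = y" if "t \<in> T \<and> (\<forall>w\<in>T. (g - t) \<bullet> w = 0)" for t
  proof -
    have "t - y \<in> T" using that y_proj T subspace_diff by blast
    then have "(g - y) \<bullet> (t - y) = 0" "(g - t) \<bullet> (t - y) = 0" using that y_proj by auto
    then have "(t - y) \<bullet> (t - y) = 0" by (simp add: inner_diff_left inner_diff_right inner_commute)
    then show ?thesis by simp
  qed
  have "orth_proj T g = y" unfolding orth_proj_def by (rule the_equality) (use y_proj unique in blast)+
  then show "orth_proj T g \<in> T" "\<And>w. w \<in> T \<Longrightarrow> (g - orth_proj T g) \<bullet> w = 0" using y_proj by auto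
qed

lemma nearest_point_normal:
  assumes q: "q \<in> M" and nearest: "\<And>q'. q' \<in> M \<Longrightarrow> dist y q \<le> dist y q'"
  shows "y - q \<in> normal_space M q"
  unfolding normal_space_def
proof safe
  fix w assume "w \<in> tangent_space M q"
  then obtain \<gamma> e where e: "e > 0" and \<gamma>: "\<forall>t\<in>{-e<..<e}. \<gamma> t \<in> M" and \<gamma>0: "\<gamma> 0 = q"
    and \<gamma>': "(\<gamma> has_vector_derivative w) (at 0)" unfolding tangent_space_def by blast
  have "((\<lambda>t. y - \<gamma> t) has_vector_derivative - w) (at 0)"
    using has_vector_derivative_diff[OF has_vector_derivative_const \<gamma>'] by simp
  from bounded_bilinear.has_vector_derivative[OF bounded_bilinear_inner this this]
  have "((\<lambda>t. (y - \<gamma> t) \<bullet> (y - \<gamma> t)) has_real_derivative - 2 * ((y - q) \<bullet> w)) (at 0)"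
    by (simp add: has_real_derivative_iff_has_vector_derivative \<gamma>0 inner_commute)
  then have "- 2 * ((y - q) \<bullet> w) = 0"
  proof (rule DERIV_local_min[OF _ e], safe)
    fix t :: real assume "\<bar>0 - t\<bar> < e"
    then have "dist y (\<gamma> 0) \<le> dist y (\<gamma> t)" using \<gamma> \<gamma>0 nearest by (auto simp: abs_less_iff)
    then show "(y - \<gamma> 0) \<bullet> (y - \<gamma> 0) \<le> (y - \<gamma> t) \<bullet> (y - \<gamma> t)"
      by (simp add: dist_norm flip: power2_norm_eq_inner power_mono)
  qed
  then show "(y - q) \<bullet> w = 0" by simp
qed

lemma reach_ok_empty: "reach_ok ({}::'a::euclidean_space set) r"
  unfolding reach_ok_def normal_bundle_def tube_def C1_on_def
  by (auto intro!: exI[of _ "\<lambda>_. 0"])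

lemma tube_mono: "r \<le> r' \<Longrightarrow> tube M r \<subseteq> tube M r'"
  unfolding tube_def normal_bundle_def by (rule image_mono) auto

lemma mem_tube: "p \<in> M \<Longrightarrow> 0 < r \<Longrightarrow> p \<in> tube M r"
  unfolding tube_def normal_bundle_def normal_space_def by (force intro: image_eqI[of _ _ "(p, 0)"])

lemma bounded_tube: "bounded M \<Longrightarrow> bounded (tube M r)"
proof -
  assume "bounded M"
  then obtain B where B: "\<And>q. q \<in> M \<Longrightarrow> norm q \<le> B" by (auto simp: bounded_iff)
  have "norm y \<le> B + r" if "y \<in> tube M r" for y
  proof -
    obtain q n where "q \<in> M" "norm n < r" "y = q + n"
      using \<open>y \<in> tube M r\<close> unfolding tube_def normal_bundle_def by auto
    then show ?thesis using B norm_triangle_ineq[of q n] by fastforce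
  qed
  then show "bounded (tube M r)" unfolding bounded_iff by blast
qed

lemma lipschitz_on_Inf:
  assumes "\<exists>K. K-lipschitz_on S f"
  shows "(Inf {K. K-lipschitz_on S f})-lipschitz_on S f"
proof (rule lipschitz_onI)
  have ne: "{K. K-lipschitz_on S f} \<noteq> {}" using assms by blast
  show "0 \<le> Inf {K. K-lipschitz_on S f}"
    by (rule cInf_greatest[OF ne]) (auto intro: lipschitz_on_nonneg)
  fix x y assume xy: "x \<in> S" "y \<in> S"
  show "dist (f x) (f y) \<le> Inf {K. K-lipschitz_on S f} * dist x y"
  proof (cases "x = y")
    case False
    have "dist (f x) (f y) / dist x y \<le> Inf {K. K-lipschitz_on S f}"
      using False lipschitz_onD[OF _ xy] by (intro cInf_greatest[OF ne]) (auto simp: divide_le_eq)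
    then show ?thesis using False by (simp add: divide_le_eq)
  qed simp
qed

lemma norm_le_onorm_diff:
  assumes "bounded_linear A" "bounded_linear B" and "onorm (\<lambda>v. A v - B v) \<le> \<epsilon>"
  shows "norm (A g - B g) \<le> \<epsilon> * norm g"
proof -
  have "norm (A g - B g) \<le> onorm (\<lambda>v. A v - B v) * norm g"
    using assms(1,2) by (intro onorm bounded_linear_sub)
  also have "\<dots> \<le> \<epsilon> * norm g" using assms(3) by (rule mult_right_mono) simp
  finally show ?thesis .
qed

lemma norm_le_SUP_continuous_bounded:
  fixes g :: "'a::euclidean_space \<Rightarrow> 'b::real_normed_vector"
  assumes "continuous_on UNIV g" and "bounded S" and "y \<in> S"
  shows "norm (g y) \<le> (SUP x\<in>S. norm (g x))"
proof (rule cSUP_upper[OF \<open>y \<in> S\<close>])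
  have "compact (closure S)"
    using bounded_closure[OF assms(2)] by (simp add: compact_eq_bounded_closed)
  then have "bounded (g ` closure S)"
    by (intro compact_imp_bounded compact_continuous_image continuous_on_subset[OF assms(1)]) simp
  moreover have "g ` S \<subseteq> g ` closure S" by (intro image_mono closure_subset)
  ultimately have "bounded (g ` S)" by (rule bounded_subset)
  then show "bdd_above ((\<lambda>x. norm (g x)) ` S)"
    by (auto simp: bounded_iff bdd_above_def)
qed

lemma projected_gradient_estimate:
  fixes t g g' x p y G :: "'a::real_inner" and A B :: "'a \<Rightarrow> 'a"
  assumes proj: "(g - t) \<bullet> t = 0" and normal: "t \<bullet> (x - p) = 0"
    and G: "G = A g' + \<eta> *\<^sub>R (x - y)" "norm G \<le> \<delta>"
    and sym: "B t \<bullet> g' = t \<bullet> B g'"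
    and AB: "norm (A g' - B g') \<le> \<alpha>" and Bt: "norm (B t - t) \<le> K * norm t" and K: "0 \<le> K"
    and g': "norm g' \<le> C" and gg': "norm (g - g') \<le> \<beta>"
    and py: "norm (p - y) \<le> \<epsilon>" and \<eta>: "0 \<le> \<eta>"
  shows "norm t \<le> \<delta> + \<eta> * \<epsilon> + \<alpha> + K * C + \<beta>"
proof -
  have "(norm t)\<^sup>2 = t \<bullet> G - \<eta> * (t \<bullet> (p - y)) + t \<bullet> (B g' - A g') + (t - B t) \<bullet> g' + t \<bullet> (g - g')"
    using proj normal sym unfolding G(1)
    by (simp add: power2_norm_eq_inner inner_add_right inner_diff_left inner_diff_right
        inner_commute algebra_simps)
  also have "\<dots> \<le> norm t * \<delta> + norm t * (\<eta> * \<epsilon>) + norm t * \<alpha> + norm t * (K * C) + norm t * \<beta>"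
  proof -
    have CS: "\<bar>a \<bullet> b\<bar> \<le> norm a * c" if "norm b \<le> c" for a b :: 'a and c
      using Cauchy_Schwarz_ineq2[of a b] mult_left_mono[OF that norm_ge_zero[of a]] by linarith
    have "\<bar>t \<bullet> G\<bar> \<le> norm t * \<delta>" "\<bar>t \<bullet> (B g' - A g')\<bar> \<le> norm t * \<alpha>"
      "\<bar>t \<bullet> (g - g')\<bar> \<le> norm t * \<beta>"
      using CS G(2) AB gg' by (auto simp: norm_minus_commute)
    moreover have "\<bar>\<eta> * (t \<bullet> (p - y))\<bar> \<le> norm t * (\<eta> * \<epsilon>)"
      using mult_left_mono[OF CS[OF py] \<eta>] \<eta> by (simp add: abs_mult ac_simps)
    moreover have "\<bar>(t - B t) \<bullet> g'\<bar> \<le> norm t * (K * C)"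
    proof -
      have "\<bar>(t - B t) \<bullet> g'\<bar> \<le> norm (t - B t) * C" using CS g' by blast
      also have "\<dots> \<le> (K * norm t) * C"
        using Bt order_trans[OF norm_ge_zero g'] by (intro mult_right_mono) (auto simp: norm_minus_commute)
      finally show ?thesis by (simp add: ac_simps)
    qed
    ultimately show ?thesis by (smt (verit) abs_le_D1 abs_le_D2)
  qed
  finally have "norm t * norm t \<le> norm t * (\<delta> + \<eta> * \<epsilon> + \<alpha> + K * C + \<beta>)"
    by (simp add: power2_eq_square algebra_simps)
  moreover have "0 \<le> \<delta> + \<eta> * \<epsilon> + \<alpha> + K * C + \<beta>"
    using G(2) py AB gg' g' K \<eta> norm_ge_zero[of G] norm_ge_zero[of "p - y"] norm_ge_zero[of g']
      norm_ge_zero[of "A g' - B g'"] norm_ge_zero[of "g - g'"]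
    by (smt (verit) mult_nonneg_nonneg)
  ultimately show ?thesis by (cases "t = 0") auto
qed

section \<open>Symmetry of the derivative of a gradient field\<close>

lemma tendsto_difference_quotient:
  fixes f :: "real \<Rightarrow> 'a::real_normed_vector"
  assumes "(f has_vector_derivative D) (at x)"
  shows "((\<lambda>t. (f t - f x) /\<^sub>R (t - x)) \<longlongrightarrow> D) (at x)"
proof -
  have "((\<lambda>t. norm (f t - f x - (t - x) *\<^sub>R D) / norm (t - x)) \<longlongrightarrow> 0) (at x)"
    using assms unfolding has_vector_derivative_def has_derivative_iff_norm by simp
  then have "((\<lambda>t. norm ((f t - f x) /\<^sub>R (t - x) - D)) \<longlongrightarrow> 0) (at x)"
  proof (rule Lim_transform_eventually)
    have "norm (f t - f x - (t - x) *\<^sub>R D) / norm (t - x) = norm ((f t - f x) /\<^sub>R (t - x) - D)"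
      if "t \<noteq> x" for t
    proof -
      have "(f t - f x) /\<^sub>R (t - x) - D = inverse (t - x) *\<^sub>R (f t - f x - (t - x) *\<^sub>R D)"
        using that by (simp add: scaleR_diff_right)
      then show ?thesis by (simp add: divide_inverse_commute)
    qed
    then show "\<forall>\<^sub>F t in at x. norm (f t - f x - (t - x) *\<^sub>R D) / norm (t - x)
        = norm ((f t - f x) /\<^sub>R (t - x) - D)"
      unfolding eventually_at_filter by (auto intro: always_eventually)
  qed
  then show ?thesis by (rule tendsto_norm_zero_cancel[THEN LIM_zero_cancel])
qed

lemma has_derivative_along_line:
  assumes "(f has_derivative f') (at (a + t *\<^sub>R u))"
  shows "((\<lambda>s. f (a + s *\<^sub>R u)) has_derivative (\<lambda>h. f' (h *\<^sub>R u))) (at t)"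
proof -
  have "((\<lambda>s. a + s *\<^sub>R u) has_derivative (\<lambda>h. h *\<^sub>R u)) (at t)"
    by (auto intro!: derivative_eq_intros)
  from has_derivative_compose[OF this assms] show ?thesis by simp
qed

lemma second_difference_mean_value:
  fixes \<phi> :: "'a::real_inner \<Rightarrow> real"
  assumes \<phi>': "\<And>y. y \<in> U \<Longrightarrow> (\<phi> has_derivative (\<lambda>h. F y \<bullet> h)) (at y)"
    and F': "\<And>y. y \<in> U \<Longrightarrow> (F has_derivative DF y) (at y)"
    and s: "s > 0"
    and square: "\<And>\<alpha> \<beta>. \<alpha> \<in> {0..s} \<Longrightarrow> \<beta> \<in> {0..s} \<Longrightarrow> x + \<alpha> *\<^sub>R u + \<beta> *\<^sub>R w \<in> U"
  obtains \<alpha> \<beta> where "\<alpha> \<in> {0<..<s}" "\<beta> \<in> {0<..<s}"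
    "\<phi> (x + s *\<^sub>R u + s *\<^sub>R w) - \<phi> (x + s *\<^sub>R u) - \<phi> (x + s *\<^sub>R w) + \<phi> x
       = s\<^sup>2 * (DF (x + \<alpha> *\<^sub>R u + \<beta> *\<^sub>R w) w \<bullet> u)"
proof -
  define k where "k \<alpha> = \<phi> ((x + s *\<^sub>R w) + \<alpha> *\<^sub>R u) - \<phi> (x + \<alpha> *\<^sub>R u)" for \<alpha>
  define k' where "k' \<alpha> = (F ((x + s *\<^sub>R w) + \<alpha> *\<^sub>R u) - F (x + \<alpha> *\<^sub>R u)) \<bullet> u" for \<alpha>
  have "DERIV k \<alpha> :> k' \<alpha>" if "0 \<le> \<alpha>" "\<alpha> \<le> s" for \<alpha>
  proof -
    have "(x + s *\<^sub>R w) + \<alpha> *\<^sub>R u \<in> U" "x + \<alpha> *\<^sub>R u \<in> U"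
      using square[of \<alpha> s] square[of \<alpha> 0] that s by (simp_all add: add_ac)
    from this[THEN \<phi>', THEN has_derivative_along_line] show ?thesis unfolding k_def k'_def
      by (rule has_derivative_imp_has_field_derivative[OF has_derivative_diff])
        (simp add: inner_diff_left algebra_simps)
  qed
  then obtain \<alpha> where \<alpha>: "0 < \<alpha>" "\<alpha> < s" "k s - k 0 = s * k' \<alpha>"
    using MVT2[OF s, of k k'] by auto
  define m where "m \<beta> = F (x + \<alpha> *\<^sub>R u + \<beta> *\<^sub>R w) \<bullet> u" for \<beta>
  define m' where "m' \<beta> = DF (x + \<alpha> *\<^sub>R u + \<beta> *\<^sub>R w) w \<bullet> u" for \<beta>
  have "DERIV m \<beta> :> m' \<beta>" if "0 \<le> \<beta>" "\<beta> \<le> s" for \<beta>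
  proof -
    have U: "x + \<alpha> *\<^sub>R u + \<beta> *\<^sub>R w \<in> U" using square \<alpha> that by simp
    have "((\<lambda>b. F (x + \<alpha> *\<^sub>R u + b *\<^sub>R w)) has_derivative
        (\<lambda>h. DF (x + \<alpha> *\<^sub>R u + \<beta> *\<^sub>R w) (h *\<^sub>R w))) (at \<beta>)"
      by (rule has_derivative_along_line) (rule F'[OF U])
    moreover have "linear (DF (x + \<alpha> *\<^sub>R u + \<beta> *\<^sub>R w))"
      using F'[OF U] has_derivative_linear by blast
    ultimately show ?thesis unfolding m_def m'_def
      by (auto intro!: has_derivative_imp_has_field_derivative
          bounded_linear.has_derivative[OF bounded_linear_inner_left] simp: linear_cmul)
  qed
  then obtain \<beta> where \<beta>: "0 < \<beta>" "\<beta> < s" "m s - m 0 = s * m' \<beta>"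
    using MVT2[OF s, of m m'] by auto
  have "\<phi> (x + s *\<^sub>R u + s *\<^sub>R w) - \<phi> (x + s *\<^sub>R u) - \<phi> (x + s *\<^sub>R w) + \<phi> x = k s - k 0"
    unfolding k_def by (simp add: add_ac)
  also have "\<dots> = s * (m s - m 0)" unfolding \<alpha>(3) k'_def m_def by (simp add: inner_diff_left add_ac)
  also have "\<dots> = s\<^sup>2 * (DF (x + \<alpha> *\<^sub>R u + \<beta> *\<^sub>R w) w \<bullet> u)"
    unfolding \<beta>(3) m'_def by (simp add: power2_eq_square)
  finally show ?thesis using that \<alpha> \<beta> by simp
qed

lemma second_difference_quotient_tendsto:
  fixes \<phi> :: "'a::real_inner \<Rightarrow> real"
  assumes U: "open U" "x \<in> U"
    and \<phi>': "\<And>y. y \<in> U \<Longrightarrow> (\<phi> has_derivative (\<lambda>h. F y \<bullet> h)) (at y)"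
    and F': "\<And>y. y \<in> U \<Longrightarrow> (F has_derivative DF y) (at y)"
    and DF_cont: "continuous_on U (\<lambda>y. DF y w)"
  shows "((\<lambda>s. (\<phi> (x + s *\<^sub>R u + s *\<^sub>R w) - \<phi> (x + s *\<^sub>R u) - \<phi> (x + s *\<^sub>R w) + \<phi> x) / s\<^sup>2)
           \<longlongrightarrow> DF x w \<bullet> u) (at_right 0)"
proof (rule tendstoI)
  fix e :: real assume e: "e > 0"
  have "((\<lambda>y. DF y w \<bullet> u) \<longlongrightarrow> DF x w \<bullet> u) (at x)"
    using DF_cont U by (intro tendsto_intros) (simp add: continuous_on_eq_continuous_at isCont_def)
  from tendstoD[OF this e] eventually_at_in_open'[OF U]
  have "\<forall>\<^sub>F y in at x. y \<in> U \<and> dist (DF y w \<bullet> u) (DF x w \<bullet> u) < e" by eventually_elim auto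
  then obtain d where d: "d > 0"
    and d_near: "\<forall>y. y \<noteq> x \<and> dist y x < d \<longrightarrow> y \<in> U \<and> dist (DF y w \<bullet> u) (DF x w \<bullet> u) < e"
    unfolding eventually_at by auto
  have near: "y \<in> U \<and> dist (DF y w \<bullet> u) (DF x w \<bullet> u) < e" if "dist y x < d" for y
    using d_near that U(2) e by (cases "y = x") auto
  define k where "k = norm u + norm w + 1"
  have k: "k > 0" by (simp add: k_def add_nonneg_pos)
  have "\<forall>\<^sub>F s in at_right 0. 0 < s \<and> s < d / k"
    using d k by (auto simp: eventually_at_right_field intro: exI[of _ "d / k"])
  then show "\<forall>\<^sub>F s in at_right 0. dist ((\<phi> (x + s *\<^sub>R u + s *\<^sub>R w) - \<phi> (x + s *\<^sub>R u)
      - \<phi> (x + s *\<^sub>R w) + \<phi> x) / s\<^sup>2) (DF x w \<bullet> u) < e"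
  proof eventually_elim
    case (elim s)
    then have s: "0 < s" "s * k < d" using k by (simp_all add: less_divide_eq)
    have close: "dist (x + \<alpha> *\<^sub>R u + \<beta> *\<^sub>R w) x < d" if "\<alpha> \<in> {0..s}" "\<beta> \<in> {0..s}" for \<alpha> \<beta>
    proof -
      have "dist (x + \<alpha> *\<^sub>R u + \<beta> *\<^sub>R w) x \<le> \<alpha> * norm u + \<beta> * norm w"
        using that norm_triangle_ineq[of "\<alpha> *\<^sub>R u" "\<beta> *\<^sub>R w"] by (simp add: dist_norm add.assoc)
      also have "\<dots> \<le> s * (norm u + norm w)"
        using that by (simp add: distrib_left add_mono mult_right_mono)
      also have "\<dots> \<le> s * k" using s(1) by (simp add: k_def)
      finally show ?thesis using s by simp
    qed
    obtain \<alpha> \<beta> where "\<alpha> \<in> {0<..<s}" "\<beta> \<in> {0<..<s}"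
      "\<phi> (x + s *\<^sub>R u + s *\<^sub>R w) - \<phi> (x + s *\<^sub>R u) - \<phi> (x + s *\<^sub>R w) + \<phi> x
         = s\<^sup>2 * (DF (x + \<alpha> *\<^sub>R u + \<beta> *\<^sub>R w) w \<bullet> u)"
      using second_difference_mean_value[OF \<phi>' F' s(1), where x = x and u = u and w = w] close near
      by blast
    with close near s(1) show ?case by simp
  qed
qed

lemma gradient_derivative_symmetric:
  fixes \<phi> :: "'a::real_inner \<Rightarrow> real"
  assumes U: "open U" "x \<in> U"
    and \<phi>': "\<And>y. y \<in> U \<Longrightarrow> (\<phi> has_derivative (\<lambda>h. F y \<bullet> h)) (at y)"
    and F': "\<And>y. y \<in> U \<Longrightarrow> (F has_derivative DF y) (at y)"
    and DF_cont: "\<And>h. continuous_on U (\<lambda>y. DF y h)"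
  shows "DF x u \<bullet> w = DF x w \<bullet> u"
proof (rule tendsto_unique[OF trivial_limit_at_right_real])
  note quotient = second_difference_quotient_tendsto[OF U \<phi>' F' DF_cont]
  show "((\<lambda>s. (\<phi> (x + s *\<^sub>R u + s *\<^sub>R w) - \<phi> (x + s *\<^sub>R u) - \<phi> (x + s *\<^sub>R w) + \<phi> x) / s\<^sup>2)
      \<longlongrightarrow> DF x w \<bullet> u) (at_right 0)"
    by (rule quotient)
  show "((\<lambda>s. (\<phi> (x + s *\<^sub>R u + s *\<^sub>R w) - \<phi> (x + s *\<^sub>R u) - \<phi> (x + s *\<^sub>R w) + \<phi> x) / s\<^sup>2)
      \<longlongrightarrow> DF x u \<bullet> w) (at_right 0)"
    using quotient[where u = w and w = u] by (simp add: algebra_simps)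
qed

section \<open>Self-adjoint maps that are almost idempotent\<close>

(* Polarisation: compare the form at t + z and t - z, where z is S t rescaled to length |t|. *)
lemma self_adjoint_norm_le:
  fixes S :: "'a::real_inner \<Rightarrow> 'a"
  assumes T: "subspace T" and lin: "linear S" and sym: "\<And>u w. S u \<bullet> w = u \<bullet> S w"
    and ST: "\<And>t. t \<in> T \<Longrightarrow> S t \<in> T"
    and form: "\<And>y. y \<in> T \<Longrightarrow> \<bar>S y \<bullet> y\<bar> \<le> K * (norm y)\<^sup>2"
    and t: "t \<in> T"
  shows "norm (S t) \<le> K * norm t"
proof (cases "S t = 0")
  case True
  have "0 \<le> K * norm t * norm t" using form[OF t] by (simp add: power2_eq_square mult.assoc)
  then show ?thesis using True by (cases "t = 0") (auto simp: zero_le_mult_iff)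
next
  case False
  define z where "z = (norm t / norm (S t)) *\<^sub>R S t"
  have zT: "z \<in> T" unfolding z_def using ST[OF t] T by (simp add: subspace_scale)
  have tz: "t + z \<in> T" "t - z \<in> T" using zT t T by (simp_all add: subspace_add subspace_diff)
  have "z \<bullet> z = t \<bullet> t" using False by (simp add: z_def power2_norm_eq_inner[symmetric] power2_eq_square)
  then have parallelogram: "(norm (t + z))\<^sup>2 + (norm (t - z))\<^sup>2 = 4 * (norm t)\<^sup>2"
    by (simp add: power2_norm_eq_inner inner_add_left inner_add_right inner_diff_left inner_diff_right
        inner_commute)
  have Stz: "S t \<bullet> z = norm t * norm (S t)"
    using False by (simp add: z_def power2_norm_eq_inner[symmetric] power2_eq_square)
  have "4 * (S t \<bullet> z) = S (t + z) \<bullet> (t + z) - S (t - z) \<bullet> (t - z)"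
    using sym[of z t] by (simp add: linear_add[OF lin] linear_diff[OF lin] inner_add_left
        inner_add_right inner_diff_left inner_diff_right inner_commute)
  also have "\<dots> \<le> K * (norm (t + z))\<^sup>2 + K * (norm (t - z))\<^sup>2"
    using form[OF tz(1)] form[OF tz(2)] by (simp add: abs_le_iff)
  finally have "norm t * norm (S t) \<le> norm t * (K * norm t)"
    unfolding Stz distrib_left[symmetric] parallelogram by (simp add: power2_eq_square ac_simps)
  moreover have "t \<noteq> 0" using False lin by (auto simp: linear_0)
  ultimately show ?thesis by simp
qed

(* e = B w - m w is orthogonal to w, and moving w along a suitable multiple of e would
   push the Rayleigh quotient below its minimum m unless e = 0. *)
lemma rayleigh_minimizer_eigenvector:
  fixes B :: "'a::real_inner \<Rightarrow> 'a"
  assumes T: "subspace T" and lin: "linear B"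
    and sym: "\<And>u w. B u \<bullet> w = u \<bullet> B w" and BT: "\<And>t. t \<in> T \<Longrightarrow> B t \<in> T"
    and w: "w \<in> T" "norm w = 1" and min: "\<And>t. t \<in> T \<Longrightarrow> (B w \<bullet> w) * (norm t)\<^sup>2 \<le> B t \<bullet> t"
  shows "B w = (B w \<bullet> w) *\<^sub>R w"
proof -
  define m e where "m = B w \<bullet> w" and "e = B w - m *\<^sub>R w"
  have eT: "e \<in> T" unfolding e_def using BT[OF w(1)] w(1) T by (simp add: subspace_diff subspace_scale)
  have "w \<bullet> w = 1" using w(2) by (metis power2_norm_eq_inner power_one)
  then have ew: "e \<bullet> w = 0" by (simp add: e_def m_def inner_diff_left)
  define Q where "Q z = (B z - m *\<^sub>R z) \<bullet> z" for z
  have Q_nonneg: "Q z \<ge> 0" if "z \<in> T" for z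
    using min[OF that] by (simp add: Q_def m_def inner_diff_left power2_norm_eq_inner)
  have Q_line: "Q (w + r *\<^sub>R e) = 2 * r * (e \<bullet> e) + r\<^sup>2 * Q e" for r
  proof -
    have Bw: "B w = e + m *\<^sub>R w" by (simp add: e_def)
    have "B e \<bullet> w = e \<bullet> e" using sym[of e w] ew by (simp add: Bw inner_add_right)
    then show ?thesis using ew unfolding Q_def
      by (simp add: linear_add[OF lin] linear_cmul[OF lin] Bw inner_add_left inner_add_right
          inner_diff_left inner_diff_right inner_commute power2_eq_square algebra_simps)
  qed
  have "e = 0"
  proof (rule ccontr)
    assume "e \<noteq> 0"
    define E K where "E = e \<bullet> e" and "K = Q e"
    have E: "E > 0" and K: "K \<ge> 0" using \<open>e \<noteq> 0\<close> Q_nonneg[OF eT] by (simp_all add: E_def K_def)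
    define r where "r = - E / (K + 1)"
    have r: "r * (K + 1) = - E" using K by (simp add: r_def)
    have "w + r *\<^sub>R e \<in> T" using w(1) eT T by (simp add: subspace_add subspace_scale)
    then have "0 \<le> (K + 1)\<^sup>2 * (2 * r * E + r\<^sup>2 * K)"
      using Q_nonneg Q_line unfolding E_def K_def by (metis zero_le_mult_iff zero_le_power2)
    also have "\<dots> = 2 * E * (K + 1) * (r * (K + 1)) + (r * (K + 1))\<^sup>2 * K"
      by (simp add: power2_eq_square algebra_simps)
    also have "\<dots> = - (E\<^sup>2 * (K + 2))" unfolding r by (simp add: power2_eq_square algebra_simps)
    finally show False using E K by (smt (verit) mult_pos_pos zero_less_power)
  qed
  then show ?thesis by (simp add: e_def m_def)
qed

lemma self_adjoint_min_eigenvector: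
  fixes B :: "'a::euclidean_space \<Rightarrow> 'a"
  assumes T: "subspace T" and nontrivial: "T \<noteq> {0}" and lin: "linear B"
    and sym: "\<And>u w. B u \<bullet> w = u \<bullet> B w" and BT: "\<And>t. t \<in> T \<Longrightarrow> B t \<in> T"
  obtains w m where "w \<in> T" "norm w = 1" "B w = m *\<^sub>R w"
    "\<And>t. t \<in> T \<Longrightarrow> m * (norm t)\<^sup>2 \<le> B t \<bullet> t"
proof -
  define S where "S = T \<inter> sphere 0 1"
  obtain t0 where t0: "t0 \<in> T" "t0 \<noteq> 0" using nontrivial subspace_0[OF T] by auto
  then have "sgn t0 \<in> S" using T by (simp add: S_def sgn_div_norm norm_sgn subspace_scale)
  moreover have "compact S"
    unfolding S_def using compact_Int_closed[OF compact_sphere closed_subspace[OF T]]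
    by (simp add: Int_commute)
  moreover have "continuous_on S (\<lambda>t. B t \<bullet> t)"
    using lin by (intro continuous_intros linear_continuous_on) (simp add: linear_linear)
  ultimately obtain w where w: "w \<in> S" and wmin: "\<And>t. t \<in> S \<Longrightarrow> B w \<bullet> w \<le> B t \<bullet> t"
    using continuous_attains_inf[of S "\<lambda>t. B t \<bullet> t"] by blast
  have wT: "w \<in> T" and nw: "norm w = 1" using w by (auto simp: S_def)
  have rayleigh: "(B w \<bullet> w) * (norm t)\<^sup>2 \<le> B t \<bullet> t" if "t \<in> T" for t
  proof (cases "t = 0")
    case True then show ?thesis by (simp add: linear_0[OF lin])
  next
    case False
    have "sgn t \<in> S" using that False T by (simp add: S_def sgn_div_norm norm_sgn subspace_scale)
    then have "B w \<bullet> w \<le> B (sgn t) \<bullet> sgn t" using wmin by blast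
    also have "\<dots> = (B t \<bullet> t) / (norm t)\<^sup>2"
      by (simp add: sgn_div_norm linear_cmul[OF lin] power2_eq_square field_simps)
    finally show ?thesis using False by (simp add: pos_le_divide_eq)
  qed
  show ?thesis
    using that[OF wT nw rayleigh_minimizer_eigenvector[OF T lin sym BT wT nw rayleigh] rayleigh] .
qed

(* An eigenvalue m of B on T satisfies |m^2 - m| <= rho m^2 and m ~= 0, hence m >= 1/(1+rho);
   applied to the smallest eigenvalue this bounds the quadratic form from below. *)
lemma almost_idempotent_form_lower_bound:
  fixes B :: "'a::euclidean_space \<Rightarrow> 'a"
  assumes T: "subspace T" and lin: "linear B"
    and sym: "\<And>u w. B u \<bullet> w = u \<bullet> B w" and BT: "\<And>t. t \<in> T \<Longrightarrow> B t \<in> T"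
    and almost_idempotent: "\<And>t. t \<in> T \<Longrightarrow> \<bar>(norm (B t))\<^sup>2 - B t \<bullet> t\<bar> \<le> \<rho> * (norm (B t))\<^sup>2"
    and inj: "\<And>t. t \<in> T \<Longrightarrow> B t = 0 \<Longrightarrow> t = 0"
    and \<rho>: "0 \<le> \<rho>" "\<rho> < 1" and y: "y \<in> T"
  shows "(norm y)\<^sup>2 / (1 + \<rho>) \<le> B y \<bullet> y"
proof (cases "T = {0}")
  case True then show ?thesis using y by simp
next
  case False
  obtain w m where w: "w \<in> T" "norm w = 1" "B w = m *\<^sub>R w"
    and rayleigh: "\<And>t. t \<in> T \<Longrightarrow> m * (norm t)\<^sup>2 \<le> B t \<bullet> t"
    using self_adjoint_min_eigenvector[OF T False lin sym BT] by metis
  have "w \<bullet> w = 1" using w(2) by (metis power2_norm_eq_inner power_one)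
  then have eigen: "\<bar>m\<^sup>2 - m\<bar> \<le> \<rho> * m\<^sup>2" using almost_idempotent[OF w(1)] w by simp
  have "m \<noteq> 0" using inj[OF w(1)] w by auto
  moreover have "(1 - \<rho>) * m\<^sup>2 \<le> m" using eigen by (simp add: abs_le_iff algebra_simps)
  ultimately have "m > 0" using \<rho> by (smt (verit) mult_pos_pos zero_less_power2)
  moreover have "m * 1 \<le> m * ((1 + \<rho>) * m)"
    using eigen by (simp add: abs_le_iff power2_eq_square algebra_simps)
  ultimately have "1 / (1 + \<rho>) \<le> m"
    using \<rho> by (simp add: mult_le_cancel_left_pos divide_le_eq mult.commute)
  then have "(norm y)\<^sup>2 / (1 + \<rho>) \<le> m * (norm y)\<^sup>2"
    using mult_right_mono[of "1 / (1 + \<rho>)" m "(norm y)\<^sup>2"] by simp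
  then show ?thesis using rayleigh[OF y] by linarith
qed

lemma self_adjoint_near_identity:
  fixes B :: "'a::euclidean_space \<Rightarrow> 'a"
  assumes T: "subspace T" and lin: "linear B"
    and sym: "\<And>u w. B u \<bullet> w = u \<bullet> B w" and BT: "\<And>t. t \<in> T \<Longrightarrow> B t \<in> T"
    and almost_idempotent: "\<And>t. t \<in> T \<Longrightarrow> \<bar>(norm (B t))\<^sup>2 - B t \<bullet> t\<bar> \<le> \<rho> * (norm (B t))\<^sup>2"
    and inj: "\<And>t. t \<in> T \<Longrightarrow> B t = 0 \<Longrightarrow> t = 0"
    and \<rho>: "0 \<le> \<rho>" "\<rho> < 1"
    and t: "t \<in> T"
  shows "norm (B t - t) \<le> \<rho> / (1 - \<rho>) * norm t"
proof -
  have upper: "B y \<bullet> y \<le> (norm y)\<^sup>2 / (1 - \<rho>)" if y: "y \<in> T" for y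
  proof -
    have CS: "B y \<bullet> y \<le> norm (B y) * norm y" by (rule norm_cauchy_schwarz)
    have "norm (B y) * ((1 - \<rho>) * norm (B y)) \<le> norm (B y) * norm y"
      using almost_idempotent[OF y] CS by (simp add: abs_le_iff power2_eq_square algebra_simps)
    then have "(1 - \<rho>) * norm (B y) \<le> norm y"
      by (cases "B y = 0") simp_all
    then have "norm (B y) * norm y \<le> norm y / (1 - \<rho>) * norm y"
      using \<rho> by (intro mult_right_mono) (simp_all add: pos_le_divide_eq mult.commute)
    then show ?thesis using CS by (simp add: power2_eq_square)
  qed
  have lower: "(norm y)\<^sup>2 / (1 + \<rho>) \<le> B y \<bullet> y" if "y \<in> T" for y
    using almost_idempotent_form_lower_bound[OF T lin sym BT _ _ \<rho> that] almost_idempotent inj by blast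
  have form: "\<bar>(B y - y) \<bullet> y\<bar> \<le> \<rho> / (1 - \<rho>) * (norm y)\<^sup>2" if y: "y \<in> T" for y
  proof -
    have "\<rho> / (1 + \<rho>) \<le> \<rho> / (1 - \<rho>)" using \<rho> by (simp add: frac_le)
    then have "(norm y)\<^sup>2 - (norm y)\<^sup>2 / (1 + \<rho>) \<le> \<rho> / (1 - \<rho>) * (norm y)\<^sup>2"
      using \<rho> mult_right_mono[of "\<rho> / (1 + \<rho>)" "\<rho> / (1 - \<rho>)" "(norm y)\<^sup>2"]
      by (simp add: field_simps)
    moreover have "(norm y)\<^sup>2 / (1 - \<rho>) - (norm y)\<^sup>2 = \<rho> / (1 - \<rho>) * (norm y)\<^sup>2"
      using \<rho> by (simp add: field_simps)
    ultimately show ?thesis using upper[OF y] lower[OF y]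
      by (simp add: abs_le_iff inner_diff_left power2_norm_eq_inner)
  qed
  show ?thesis
  proof (rule self_adjoint_norm_le[OF T _ _ _ form t])
    show "linear (\<lambda>y. B y - y)" by (rule linear_compose_sub[OF lin linear_ident])
    show "(B u - u) \<bullet> w = u \<bullet> (B w - w)" for u w by (simp add: inner_diff_left inner_diff_right sym)
    show "B y - y \<in> T" if "y \<in> T" for y using BT that T subspace_diff by blast
  qed
qed

section \<open>Sets of positive reach\<close>

(* This is (|z|^2 - dist z (closest_point M z)^2) / 2. Its gradient is the closest-point map,
   which is why the derivative of that map is self-adjoint. *)
definition closest_point_potential :: "'a::euclidean_space set \<Rightarrow> 'a \<Rightarrow> real" where
  "closest_point_potential M z = z \<bullet> closest_point M z - (closest_point M z \<bullet> closest_point M z) / 2"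

locale positive_reach =
  fixes M :: "'a::euclidean_space set" and tM :: real
  assumes closed_M: "closed M" and reach: "is_reach M tM" and reach_pos: "0 < tM"

begin

lemma reach_ok: "reach_ok M tM"
  using reach by (simp add: is_reach_def)

lemma M_nonempty: "M \<noteq> {}"
proof
  assume "M = {}"
  then have "reach_ok M (tM + 1)" using reach_ok_empty by simp
  moreover have "0 \<le> tM + 1" using reach_pos by simp
  ultimately have "tM + 1 \<le> tM" using reach unfolding is_reach_def by blast
  then show False by simp
qed

lemma open_tube: "open (tube M tM)"
  using reach_ok by (simp add: reach_ok_def)

lemma nearest_point_unique:
  assumes p: "p \<in> M" and n: "n \<in> normal_space M p" "norm n < tM"
    and q: "q \<in> M" and nearest: "\<And>q'. q' \<in> M \<Longrightarrow> dist (p + n) q \<le> dist (p + n) q'"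
  shows "q = p"
proof -
  have "norm (p + n - q) \<le> norm n" using nearest[OF p] by (simp add: dist_norm)
  then have qn: "(q, p + n - q) \<in> normal_bundle M tM"
    using nearest_point_normal[OF q nearest] q n(2) unfolding normal_bundle_def by simp
  have pn: "(p, n) \<in> normal_bundle M tM" using p n unfolding normal_bundle_def by simp
  have inj: "inj_on (\<lambda>(p, v). p + v) (normal_bundle M tM)"
    using reach_ok by (simp add: reach_ok_def)
  have "(\<lambda>(p, v). p + v) (q, p + n - q) = (\<lambda>(p, v). p + v) (p, n)" by simp
  from inj_onD[OF inj this qn pn] have "fst (q, p + n - q) = fst (p, n)" by (rule arg_cong)
  then show "q = p" by simp
qed

lemma nearest_point_translate:
  assumes p: "p \<in> M" and n: "n \<in> normal_space M p" "norm n < tM" and q: "q \<in> M"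
  shows "dist (p + n) p \<le> dist (p + n) q"
proof -
  from distance_attains_inf[OF closed_M M_nonempty, of "p + n"]
  obtain q0 where "q0 \<in> M" and nearest: "\<And>q'. q' \<in> M \<Longrightarrow> dist (p + n) q0 \<le> dist (p + n) q'"
    by auto
  moreover from this have "q0 = p" by (rule nearest_point_unique[OF p n])
  ultimately show ?thesis using q by simp
qed

lemma closest_point_translate:
  assumes p: "p \<in> M" and n: "n \<in> normal_space M p" "norm n < tM"
  shows "closest_point M (p + n) = p"
  unfolding closest_point_def
  using nearest_point_translate[OF assms] nearest_point_unique[OF assms] p
  by (intro the_equality) auto

lemma closest_point_self: "p \<in> M \<Longrightarrow> closest_point M p = p"
  using closest_point_translate[of p 0] reach_pos by (simp add: subspace_0[OF normal_space_subspace])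

lemma tube_closest_point:
  assumes y: "y \<in> tube M r" and r: "r \<le> tM"
  shows "closest_point M y \<in> M" "y - closest_point M y \<in> normal_space M (closest_point M y)"
    "norm (y - closest_point M y) < r" "\<And>q. q \<in> M \<Longrightarrow> dist y (closest_point M y) \<le> dist y q"
proof -
  obtain p n where p: "p \<in> M" and n: "n \<in> normal_space M p" "norm n < r" and y: "y = p + n"
    using y unfolding tube_def normal_bundle_def by auto
  then have "closest_point M y = p" using closest_point_translate r by simp
  with p n y r nearest_point_translate[OF p n(1)]
  show "closest_point M y \<in> M" "y - closest_point M y \<in> normal_space M (closest_point M y)"
    "norm (y - closest_point M y) < r" "\<And>q. q \<in> M \<Longrightarrow> dist y (closest_point M y) \<le> dist y q"
    by simp_all
qed

(* Federer's reach inequality. For |n'| < tM the point p is still nearest to p + n';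
   let |n'| tend to tM. *)
lemma reach_inequality:
  assumes p: "p \<in> M" and n: "n \<in> normal_space M p" and q: "q \<in> M"
  shows "2 * tM * (n \<bullet> (q - p)) \<le> norm n * (norm (q - p))\<^sup>2"
proof (cases "n = 0")
  case False
  have "z * (2 * tM * (n \<bullet> (q - p))) \<le> norm n * (norm (q - p))\<^sup>2" if z: "0 < z" "z < 1" for z
  proof -
    define n' where "n' = (z * tM / norm n) *\<^sub>R n"
    have "norm n' = z * tM" using False z reach_pos by (simp add: n'_def)
    moreover have "n' \<in> normal_space M p"
      unfolding n'_def using n normal_space_subspace subspace_scale by blast
    ultimately have "dist (p + n') p \<le> dist (p + n') q"
      using nearest_point_translate[OF p _ _ q] z reach_pos by simp
    then have "norm n' \<le> norm (n' - (q - p))" by (simp add: dist_norm algebra_simps)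
    then have "(norm n')\<^sup>2 \<le> (norm (n' - (q - p)))\<^sup>2" by (simp add: power_mono)
    then have "2 * (n' \<bullet> (q - p)) \<le> (norm (q - p))\<^sup>2"
      by (simp add: power2_norm_eq_inner inner_diff_left inner_diff_right inner_commute)
    then have "norm n * (2 * (n' \<bullet> (q - p))) \<le> norm n * (norm (q - p))\<^sup>2"
      by (simp add: mult_left_mono)
    moreover have "norm n * (2 * (n' \<bullet> (q - p))) = z * (2 * tM * (n \<bullet> (q - p)))"
      using False by (simp add: n'_def)
    ultimately show ?thesis by simp
  qed
  then show ?thesis by (rule field_le_mult_one_interval)
qed simp

lemma reach_inequality_abs:
  assumes p: "p \<in> M" and n: "n \<in> normal_space M p" and q: "q \<in> M"
  shows "2 * tM * \<bar>n \<bullet> (q - p)\<bar> \<le> norm n * (norm (q - p))\<^sup>2"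
  using reach_inequality[OF p n q] reach_inequality[OF p subspace_neg[OF normal_space_subspace n] q]
  by (cases "n \<bullet> (q - p) \<ge> 0") simp_all

lemma reach_inequality_scaled:
  assumes p: "p \<in> M" and n: "n \<in> normal_space M p" and q: "q \<in> M"
    and t: "t > 0" and b: "q - p = t *\<^sub>R b"
  shows "2 * tM * \<bar>n \<bullet> b\<bar> \<le> t * (norm n * (norm b)\<^sup>2)"
proof -
  have "t * (2 * tM * \<bar>n \<bullet> b\<bar>) = 2 * tM * \<bar>n \<bullet> (q - p)\<bar>"
    using t by (simp add: b abs_mult)
  also have "\<dots> \<le> norm n * (norm (q - p))\<^sup>2" by (rule reach_inequality_abs[OF p n q])
  also have "\<dots> = t * (t * (norm n * (norm b)\<^sup>2))"
    using t by (simp add: b power_mult_distrib power2_eq_square)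
  finally show ?thesis using t by (simp add: mult_le_cancel_left_pos)
qed

(* Difference-quotient forms of the reach inequality for two feet p and q with q - p = t b.
   Moving x along a line, resp. moving a point of M together with the normal vector x - p,
   and letting t tend to 0 gives the estimates on the derivative of the closest-point map. *)
lemma foot_displacement_bound:
  assumes t: "t > 0" and p: "p \<in> M" "v \<in> normal_space M p" and q: "q \<in> M" "u \<in> normal_space M q"
    and b: "q - p = t *\<^sub>R b" and u: "u = v + t *\<^sub>R w - t *\<^sub>R b"
  shows "2 * tM * \<bar>(norm b)\<^sup>2 - b \<bullet> w\<bar> \<le> (norm u + norm v) * (norm b)\<^sup>2"
proof -
  have "p - q = t *\<^sub>R (- b)" using b by (simp add: algebra_simps)
  from reach_inequality_scaled[OF q p(1) t this]
  have U: "2 * tM * \<bar>u \<bullet> b\<bar> \<le> t * (norm u * (norm b)\<^sup>2)" by simp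
  have V: "2 * tM * \<bar>v \<bullet> b\<bar> \<le> t * (norm v * (norm b)\<^sup>2)"
    by (rule reach_inequality_scaled[OF p q(1) t b])
  have "t * ((norm b)\<^sup>2 - b \<bullet> w) = v \<bullet> b - u \<bullet> b"
    by (simp add: u inner_add_left inner_diff_left power2_norm_eq_inner inner_commute algebra_simps)
  then have "t * \<bar>(norm b)\<^sup>2 - b \<bullet> w\<bar> \<le> \<bar>v \<bullet> b\<bar> + \<bar>u \<bullet> b\<bar>"
    using t abs_triangle_ineq4[of "v \<bullet> b" "u \<bullet> b"] by (simp add: abs_mult)
  then have "2 * tM * (t * \<bar>(norm b)\<^sup>2 - b \<bullet> w\<bar>) \<le> 2 * tM * (\<bar>v \<bullet> b\<bar> + \<bar>u \<bullet> b\<bar>)"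
    using reach_pos by (intro mult_left_mono) simp_all
  also have "\<dots> \<le> t * ((norm u + norm v) * (norm b)\<^sup>2)"
    using U V by (simp add: algebra_simps)
  finally show ?thesis using t by (simp add: mult.left_commute[of t] mult_le_cancel_left_pos)
qed

lemma foot_separation_bound:
  assumes t: "t > 0" and p: "p \<in> M" "v \<in> normal_space M p" and q: "q \<in> M" "u \<in> normal_space M q"
    and g: "g \<in> M" and a: "g - p = t *\<^sub>R a" and d: "q - p = t *\<^sub>R d"
    and u: "u = t *\<^sub>R a - t *\<^sub>R d + v"
  shows "2 * tM * (norm (a - d))\<^sup>2 \<le> norm u * (norm (a - d))\<^sup>2 + norm v * ((norm a)\<^sup>2 + (norm d)\<^sup>2)"
proof -
  have "g - q = t *\<^sub>R (a - d)" using a d by (simp add: algebra_simps)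
  from reach_inequality_scaled[OF q g t this]
  have U: "2 * tM * \<bar>u \<bullet> (a - d)\<bar> \<le> t * (norm u * (norm (a - d))\<^sup>2)" .
  have A: "2 * tM * \<bar>v \<bullet> a\<bar> \<le> t * (norm v * (norm a)\<^sup>2)"
    by (rule reach_inequality_scaled[OF p g t a])
  have D: "2 * tM * \<bar>v \<bullet> d\<bar> \<le> t * (norm v * (norm d)\<^sup>2)"
    by (rule reach_inequality_scaled[OF p q(1) t d])
  have "t * (norm (a - d))\<^sup>2 = u \<bullet> (a - d) - v \<bullet> a + v \<bullet> d"
    by (simp add: u inner_add_left inner_diff_left inner_diff_right power2_norm_eq_inner
        inner_commute algebra_simps)
  also have "\<dots> \<le> \<bar>u \<bullet> (a - d)\<bar> + \<bar>v \<bullet> a\<bar> + \<bar>v \<bullet> d\<bar>" by linarith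
  finally have "2 * tM * (t * (norm (a - d))\<^sup>2) \<le> 2 * tM * (\<bar>u \<bullet> (a - d)\<bar> + \<bar>v \<bullet> a\<bar> + \<bar>v \<bullet> d\<bar>)"
    using reach_pos by (intro mult_left_mono) simp_all
  also have "\<dots> \<le> t * (norm u * (norm (a - d))\<^sup>2 + norm v * ((norm a)\<^sup>2 + (norm d)\<^sup>2))"
    using U A D by (simp add: algebra_simps)
  finally show ?thesis using t by (simp add: mult.left_commute[of t] mult_le_cancel_left_pos)
qed

subsection \<open>The derivative of the closest-point map\<close>

abbreviation D\<pi> :: "'a \<Rightarrow> 'a \<Rightarrow> 'a" where
  "D\<pi> y \<equiv> frechet_derivative (closest_point M) (at y)"

lemma closest_point_continuously_differentiable:
  "\<exists>D. (\<forall>y\<in>tube M tM. (closest_point M has_derivative D y) (at y)) \<and>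
      (\<forall>h. continuous_on (tube M tM) (\<lambda>y. D y h))"
proof -
  obtain g g' where inverse: "\<forall>z\<in>normal_bundle M tM. g ((\<lambda>(p, v). p + v) z) = z"
    and g': "\<forall>y\<in>tube M tM. (g has_derivative blinfun_apply (g' y)) (at y)"
    and g'_cont: "continuous_on (tube M tM) g'"
    using reach_ok unfolding reach_ok_def C1_on_def by blast
  have fst_g: "fst (g y) = closest_point M y" if y: "y \<in> tube M tM" for y
  proof -
    from y obtain p n where "(p, n) \<in> normal_bundle M tM" "y = p + n"
      unfolding tube_def by auto
    with inverse show ?thesis using closest_point_translate unfolding normal_bundle_def by auto
  qed
  have "(closest_point M has_derivative (\<lambda>h. fst (g' y h))) (at y)" if y: "y \<in> tube M tM" for y
    using has_derivative_fst[OF g'[rule_format, OF y]]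
    by (rule has_derivative_transform_within_open[OF _ open_tube y]) (simp add: fst_g)
  moreover have "continuous_on (tube M tM) (\<lambda>y. fst (g' y h))" for h
    by (intro continuous_intros g'_cont)
  ultimately show ?thesis by (intro exI[of _ "\<lambda>y h. fst (g' y h)"]) blast
qed

lemma has_derivative_closest_point:
  "y \<in> tube M tM \<Longrightarrow> (closest_point M has_derivative D\<pi> y) (at y)"
  using closest_point_continuously_differentiable frechet_derivative_at by metis

lemma continuous_on_closest_point_derivative: "continuous_on (tube M tM) (\<lambda>y. D\<pi> y h)"
proof -
  obtain D where D: "\<And>y. y \<in> tube M tM \<Longrightarrow> (closest_point M has_derivative D y) (at y)"
    and D_cont: "continuous_on (tube M tM) (\<lambda>y. D y h)"
    using closest_point_continuously_differentiable by blast
  show ?thesis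
  proof (rule continuous_on_eq[OF D_cont])
    show "D y h = D\<pi> y h" if "y \<in> tube M tM" for y
      by (simp only: frechet_derivative_at[OF D[OF that]])
  qed
qed

lemma linear_closest_point_derivative: "y \<in> tube M tM \<Longrightarrow> linear (D\<pi> y)"
  using has_derivative_closest_point has_derivative_linear by blast

lemma has_vector_derivative_closest_point_comp:
  assumes y: "y \<in> tube M tM" and c: "(c has_vector_derivative c') (at t)" and ct: "c t = y"
  shows "((\<lambda>s. closest_point M (c s)) has_vector_derivative D\<pi> y c') (at t)"
  using has_derivative_compose[OF c[unfolded has_vector_derivative_def], of _ "D\<pi> y"]
    has_derivative_closest_point[OF y] linear_closest_point_derivative[OF y]
  unfolding has_vector_derivative_def by (simp add: ct linear_cmul)

lemma closest_point_along_curve: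
  assumes y: "y \<in> tube M tM" and c: "(c has_vector_derivative c') (at 0)" and c0: "c 0 = y"
  shows "((\<lambda>t. (closest_point M (c t) - closest_point M y) /\<^sub>R t) \<longlongrightarrow> D\<pi> y c') (at_right 0)"
    and "((\<lambda>t. norm (c t - closest_point M (c t))) \<longlongrightarrow> norm (y - closest_point M y)) (at_right 0)"
    and "\<forall>\<^sub>F t in at_right 0. 0 < t \<and> c t \<in> tube M tM"
proof -
  note \<pi>c' = has_vector_derivative_closest_point_comp[OF y c c0]
  show "((\<lambda>t. (closest_point M (c t) - closest_point M y) /\<^sub>R t) \<longlongrightarrow> D\<pi> y c') (at_right 0)"
    using tendsto_difference_quotient[OF \<pi>c'] c0 by (auto intro: tendsto_within_subset)
  have "(c \<longlongrightarrow> y) (at_right 0)" "((\<lambda>t. closest_point M (c t)) \<longlongrightarrow> closest_point M y) (at_right 0)"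
    using has_vector_derivative_continuous[OF c] has_vector_derivative_continuous[OF \<pi>c'] c0
    by (auto simp: isCont_def intro: tendsto_within_subset)
  then show "((\<lambda>t. norm (c t - closest_point M (c t))) \<longlongrightarrow> norm (y - closest_point M y)) (at_right 0)"
    by (intro tendsto_intros)
  show "\<forall>\<^sub>F t in at_right 0. 0 < t \<and> c t \<in> tube M tM"
    using eventually_conj[OF eventually_at_right_less topological_tendstoD[OF \<open>(c \<longlongrightarrow> y) _\<close> open_tube y]] .
qed

lemma closest_point_derivative_tangent:
  assumes y: "y \<in> tube M tM"
  shows "D\<pi> y u \<in> tangent_space M (closest_point M y)"
proof -
  obtain e where e: "e > 0" "ball y e \<subseteq> tube M tM" using open_tube y open_contains_ball by blast
  define e' where "e' = e / (norm u + 1)"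
  have e': "e' > 0" using e by (simp add: e'_def add_nonneg_pos)
  have inM: "closest_point M (y + t *\<^sub>R u) \<in> M" if "t \<in> {-e'<..<e'}" for t
  proof -
    have "norm (t *\<^sub>R u) \<le> \<bar>t\<bar> * (norm u + 1)" by (simp add: mult_left_mono)
    also have "\<dots> < e' * (norm u + 1)" using that by (intro mult_strict_right_mono) (auto simp: add_nonneg_pos)
    also have "\<dots> = e" by (simp add: e'_def add_pos_nonneg[THEN less_imp_neq, symmetric] add.commute)
    finally have "y + t *\<^sub>R u \<in> tube M tM" using e by (auto simp: dist_norm)
    then show ?thesis using tube_closest_point(1)[OF _ order_refl] by blast
  qed
  have "((\<lambda>t. y + t *\<^sub>R u) has_vector_derivative u) (at 0)"
    by (auto intro!: derivative_eq_intros)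
  from has_vector_derivative_closest_point_comp[OF y this]
  have "((\<lambda>t. closest_point M (y + t *\<^sub>R u)) has_vector_derivative D\<pi> y u) (at 0)" by simp
  with e' inM show ?thesis unfolding tangent_space_def by force
qed

lemma closest_point_derivative_fixes_tangent:
  assumes p: "p \<in> M" and w: "w \<in> tangent_space M p"
  shows "D\<pi> p w = w"
proof -
  obtain \<gamma> e where e: "e > 0" and \<gamma>: "\<forall>t\<in>{-e<..<e}. \<gamma> t \<in> M" and \<gamma>0: "\<gamma> 0 = p"
    and \<gamma>': "(\<gamma> has_vector_derivative w) (at 0)" using w unfolding tangent_space_def by blast
  have "((\<lambda>t. closest_point M (\<gamma> t)) has_vector_derivative D\<pi> p w) (at 0)"
    by (rule has_vector_derivative_closest_point_comp[OF mem_tube[OF p reach_pos] \<gamma>' \<gamma>0])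
  moreover have "closest_point M (\<gamma> t) = \<gamma> t" if "t \<in> {-e<..<e}" for t
    using closest_point_self \<gamma> that by blast
  ultimately have "(\<gamma> has_vector_derivative D\<pi> p w) (at 0)"
    using has_vector_derivative_transform_within_open[of _ _ 0 "{-e<..<e}"] e by auto
  then show ?thesis using \<gamma>' vector_derivative_unique_at by blast
qed

lemma tangent_space_eq_range:
  assumes p: "p \<in> M"
  shows "tangent_space M p = range (D\<pi> p)"
proof
  show "tangent_space M p \<subseteq> range (D\<pi> p)"
    using closest_point_derivative_fixes_tangent[OF p] by (metis rangeI subsetI)
  show "range (D\<pi> p) \<subseteq> tangent_space M p"
    using closest_point_derivative_tangent[OF mem_tube[OF p reach_pos]] closest_point_self[OF p] by auto
qed

lemma subspace_tangent_space: "p \<in> M \<Longrightarrow> subspace (tangent_space M p)"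
  using linear_subspace_image[OF linear_closest_point_derivative[OF mem_tube] subspace_UNIV]
  by (simp add: tangent_space_eq_range reach_pos)

lemma closest_point_potential_bounds:
  assumes y: "y \<in> tube M tM" and z: "z \<in> tube M tM"
  defines "\<Delta> \<equiv> closest_point_potential M z - closest_point_potential M y - closest_point M y \<bullet> (z - y)"
  shows "0 \<le> \<Delta>" "\<Delta> \<le> (z - y) \<bullet> (closest_point M z - closest_point M y)"
proof -
  define a c where "a = closest_point M y" and "c = closest_point M z"
  have "dist z c \<le> dist z a" "dist y a \<le> dist y c"
    using tube_closest_point(1,4)[OF y order_refl] tube_closest_point(1,4)[OF z order_refl]
    unfolding a_def c_def by blast+
  then have "(z - c) \<bullet> (z - c) \<le> (z - a) \<bullet> (z - a)" "(y - a) \<bullet> (y - a) \<le> (y - c) \<bullet> (y - c)"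
    by (simp_all add: dist_norm flip: power2_norm_eq_inner add: power_mono)
  then show "0 \<le> \<Delta>" "\<Delta> \<le> (z - y) \<bullet> (closest_point M z - closest_point M y)"
    unfolding \<Delta>_def closest_point_potential_def a_def[symmetric] c_def[symmetric]
    by (simp_all add: inner_diff_left inner_diff_right inner_commute algebra_simps)
qed

lemma has_derivative_closest_point_potential:
  assumes y: "y \<in> tube M tM"
  shows "(closest_point_potential M has_derivative (\<lambda>h. closest_point M y \<bullet> h)) (at y)"
  unfolding has_derivative_at_alt
proof (intro conjI allI impI)
  show "bounded_linear (\<lambda>h. closest_point M y \<bullet> h)" by (rule bounded_linear_inner_right)
  fix e :: real assume e: "e > 0"
  obtain d0 where d0: "d0 > 0" "ball y d0 \<subseteq> tube M tM" using open_tube y open_contains_ball by blast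
  have "isCont (closest_point M) y" using has_derivative_continuous[OF has_derivative_closest_point[OF y]] .
  then obtain d1 where d1: "d1 > 0"
    and near: "\<And>z. dist z y < d1 \<Longrightarrow> dist (closest_point M z) (closest_point M y) < e"
    using e unfolding continuous_at_eps_delta by blast
  show "\<exists>d>0. \<forall>z. norm (z - y) < d \<longrightarrow>
      norm (closest_point_potential M z - closest_point_potential M y - closest_point M y \<bullet> (z - y))
        \<le> e * norm (z - y)"
  proof (intro exI[of _ "min d0 d1"] conjI allI impI)
    show "min d0 d1 > 0" using d0 d1 by simp
    fix z assume z: "norm (z - y) < min d0 d1"
    then have zt: "z \<in> tube M tM" using d0 by (auto simp: dist_norm norm_minus_commute)
    have "(z - y) \<bullet> (closest_point M z - closest_point M y)
        \<le> norm (z - y) * norm (closest_point M z - closest_point M y)"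
      by (rule norm_cauchy_schwarz)
    also have "\<dots> \<le> norm (z - y) * e"
      using near[of z] z by (intro mult_left_mono) (auto simp: dist_norm)
    finally show "norm (closest_point_potential M z - closest_point_potential M y
        - closest_point M y \<bullet> (z - y)) \<le> e * norm (z - y)"
      using closest_point_potential_bounds[OF y zt] by (simp add: mult.commute)
  qed
qed

lemma closest_point_derivative_symmetric:
  assumes y: "y \<in> tube M tM"
  shows "D\<pi> y u \<bullet> w = u \<bullet> D\<pi> y w"
  using gradient_derivative_symmetric[OF open_tube y has_derivative_closest_point_potential
      has_derivative_closest_point continuous_on_closest_point_derivative]
  by (simp add: inner_commute)

lemma closest_point_derivative_almost_idempotent:
  assumes x: "x \<in> tube M tM"
  shows "tM * \<bar>(norm (D\<pi> x w))\<^sup>2 - D\<pi> x w \<bullet> w\<bar> \<le> norm (x - closest_point M x) * (norm (D\<pi> x w))\<^sup>2"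
proof -
  define p v where "p = closest_point M x" and "v = x - p"
  have p: "p \<in> M" "v \<in> normal_space M p"
    using tube_closest_point[OF x order_refl] unfolding p_def v_def by auto
  define q b u where "q t = closest_point M (x + t *\<^sub>R w)" and "b t = (q t - p) /\<^sub>R t"
    and "u t = x + t *\<^sub>R w - q t" for t
  have "((\<lambda>t. x + t *\<^sub>R w) has_vector_derivative w) (at 0)" by (auto intro!: derivative_eq_intros)
  from closest_point_along_curve[OF x this]
  have lim_b: "(b \<longlongrightarrow> D\<pi> x w) (at_right 0)"
    and lim_u: "((\<lambda>t. norm (u t)) \<longlongrightarrow> norm v) (at_right 0)"
    and ev: "\<forall>\<^sub>F t in at_right 0. 0 < t \<and> x + t *\<^sub>R w \<in> tube M tM"
    unfolding b_def u_def q_def p_def v_def by simp_all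
  have "\<forall>\<^sub>F t in at_right 0. 2 * tM * \<bar>(norm (b t))\<^sup>2 - b t \<bullet> w\<bar> \<le> (norm (u t) + norm v) * (norm (b t))\<^sup>2"
    using ev
  proof eventually_elim
    case (elim t)
    then have t: "0 < t" and xt: "x + t *\<^sub>R w \<in> tube M tM" by auto
    show ?case
    proof (rule foot_displacement_bound[OF t p])
      show "q t \<in> M" "u t \<in> normal_space M (q t)"
        using tube_closest_point(1,2)[OF xt order_refl] unfolding q_def u_def by auto
      show "q t - p = t *\<^sub>R b t" using t by (simp add: b_def)
      then show "u t = v + t *\<^sub>R w - t *\<^sub>R b t" by (simp add: u_def v_def algebra_simps)
    qed
  qed
  then have "2 * tM * \<bar>(norm (D\<pi> x w))\<^sup>2 - D\<pi> x w \<bullet> w\<bar> \<le> (norm v + norm v) * (norm (D\<pi> x w))\<^sup>2"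
    by (rule tendsto_le[OF trivial_limit_at_right_real, rotated 2]) (intro tendsto_intros lim_b lim_u)+
  then show ?thesis by (simp add: p_def v_def algebra_simps)
qed

lemma closest_point_derivative_tangent_injective:
  assumes x: "x \<in> tube M tM" and w: "w \<in> tangent_space M (closest_point M x)"
    and kernel: "D\<pi> x w = 0"
  shows "w = 0"
proof -
  define p v where "p = closest_point M x" and "v = x - p"
  have p: "p \<in> M" "v \<in> normal_space M p" and r: "norm v < tM"
    using tube_closest_point[OF x order_refl] unfolding p_def v_def by auto
  have pt: "p \<in> tube M tM" using mem_tube[OF p(1) reach_pos] .
  define \<gamma> c where "\<gamma> t = closest_point M (p + t *\<^sub>R w)" and "c t = \<gamma> t + v" for t
  have line: "((\<lambda>t. p + t *\<^sub>R w) has_vector_derivative w) (at 0)" by (auto intro!: derivative_eq_intros)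
  have Dw: "D\<pi> p w = w" using closest_point_derivative_fixes_tangent[OF p(1)] w unfolding p_def by simp
  have \<gamma>0: "\<gamma> 0 = p" using closest_point_self[OF p(1)] by (simp add: \<gamma>_def)
  have c': "(c has_vector_derivative w) (at 0)"
    using has_vector_derivative_closest_point_comp[OF pt line] Dw unfolding c_def \<gamma>_def
    by (auto intro!: derivative_eq_intros)
  have c0: "c 0 = x" by (simp add: c_def \<gamma>0 v_def)
  define q a d u where "q t = closest_point M (c t)" and "a t = (\<gamma> t - p) /\<^sub>R t"
    and "d t = (q t - p) /\<^sub>R t" and "u t = c t - q t" for t
  from closest_point_along_curve[OF pt line]
  have lim_a: "(a \<longlongrightarrow> w) (at_right 0)" and ev_\<gamma>: "\<forall>\<^sub>F t in at_right 0. p + t *\<^sub>R w \<in> tube M tM"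
    using Dw closest_point_self[OF p(1)] unfolding a_def \<gamma>_def by (auto elim: eventually_mono)
  from closest_point_along_curve[OF x c' c0]
  have lim_d: "(d \<longlongrightarrow> 0) (at_right 0)" and lim_u: "((\<lambda>t. norm (u t)) \<longlongrightarrow> norm v) (at_right 0)"
    and ev_c: "\<forall>\<^sub>F t in at_right 0. 0 < t \<and> c t \<in> tube M tM"
    using kernel unfolding d_def u_def q_def p_def v_def by simp_all
  have "\<forall>\<^sub>F t in at_right 0. 2 * tM * (norm (a t - d t))\<^sup>2
      \<le> norm (u t) * (norm (a t - d t))\<^sup>2 + norm v * ((norm (a t))\<^sup>2 + (norm (d t))\<^sup>2)"
    using ev_c ev_\<gamma>
  proof eventually_elim
    case (elim t)
    then have t: "0 < t" and ct: "c t \<in> tube M tM" and lt: "p + t *\<^sub>R w \<in> tube M tM" by auto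
    show ?case
    proof (rule foot_separation_bound[OF t p])
      show "q t \<in> M" "u t \<in> normal_space M (q t)"
        using tube_closest_point(1,2)[OF ct order_refl] unfolding q_def u_def by auto
      show "\<gamma> t \<in> M" using tube_closest_point(1)[OF lt order_refl] unfolding \<gamma>_def .
      show "\<gamma> t - p = t *\<^sub>R a t" "q t - p = t *\<^sub>R d t" using t by (simp_all add: a_def d_def)
      then show "u t = t *\<^sub>R a t - t *\<^sub>R d t + v" by (simp add: u_def c_def algebra_simps)
    qed
  qed
  then have "2 * tM * (norm (w - 0))\<^sup>2 \<le> norm v * (norm (w - 0))\<^sup>2 + norm v * ((norm w)\<^sup>2 + (norm (0::'a))\<^sup>2)"
    by (rule tendsto_le[OF trivial_limit_at_right_real, rotated 2]) (intro tendsto_intros lim_a lim_d lim_u)+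
  then have "(tM - norm v) * (norm w)\<^sup>2 \<le> 0" by (simp add: algebra_simps)
  with r show "w = 0" by (simp add: mult_le_0_iff)
qed

lemma closest_point_derivative_near_identity:
  assumes x: "x \<in> tube M r" and r: "r < tM" and t: "t \<in> tangent_space M (closest_point M x)"
  shows "norm (D\<pi> x t - t) \<le> (r / tM) / (1 - r / tM) * norm t"
proof -
  define \<rho> where "\<rho> = norm (x - closest_point M x) / tM"
  have x_tM: "x \<in> tube M tM" using tube_mono[OF less_imp_le[OF r]] x ..
  have \<rho>: "0 \<le> \<rho>" "\<rho> \<le> r / tM" "r / tM < 1"
    using tube_closest_point(3)[OF x] r reach_pos by (simp_all add: \<rho>_def divide_right_mono)
  have "norm (D\<pi> x t - t) \<le> \<rho> / (1 - \<rho>) * norm t"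
  proof (rule self_adjoint_near_identity[OF subspace_tangent_space linear_closest_point_derivative[OF x_tM]
        closest_point_derivative_symmetric[OF x_tM] closest_point_derivative_tangent[OF x_tM] _
        closest_point_derivative_tangent_injective[OF x_tM] _ _ t])
    show "closest_point M x \<in> M" using tube_closest_point(1)[OF x_tM order_refl] .
    show "\<bar>(norm (D\<pi> x w))\<^sup>2 - D\<pi> x w \<bullet> w\<bar> \<le> \<rho> * (norm (D\<pi> x w))\<^sup>2" for w
      using closest_point_derivative_almost_idempotent[OF x_tM, of w] reach_pos
      by (simp add: \<rho>_def pos_le_divide_eq mult.commute)
    show "0 \<le> \<rho>" "\<rho> < 1" using \<rho> by simp_all
  qed
  also have "\<dots> \<le> (r / tM) / (1 - r / tM) * norm t"
    using \<rho> by (intro mult_right_mono frac_le) simp_all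
  finally show ?thesis .
qed

(* The theorem at a single point: y stands for s x and A for the derivative of s at x. *)
lemma manifold_grad_estimate:
  assumes x: "x \<in> tube M r" and r: "r < tM"
    and y: "y \<in> tube M tM" and y_close: "norm (y - closest_point M x) \<le> \<epsilon>"
    and A: "bounded_linear A" and A_close: "onorm (\<lambda>v. A v - D\<pi> x v) \<le> \<epsilon>"
    and gradf_bound: "\<And>z. z \<in> tube M tM \<Longrightarrow> norm (gradf z) \<le> C"
    and gradf_lip: "L-lipschitz_on (tube M tM) gradf" and \<eta>: "0 \<le> \<eta>"
    and G: "norm (A (gradf y) + \<eta> *\<^sub>R (x - y)) \<le> \<delta>"
  shows "norm (manifold_grad M gradf (closest_point M x))
    \<le> \<delta> + \<eta> * \<epsilon> + \<epsilon> * C + (r / tM) / (1 - r / tM) * C + L * \<epsilon>"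
proof -
  define p t where "p = closest_point M x" and "t = manifold_grad M gradf p"
  have x_tM: "x \<in> tube M tM" using tube_mono[OF less_imp_le[OF r]] x ..
  have p: "p \<in> M" "x - p \<in> normal_space M p" "norm (x - p) < r"
    using tube_closest_point[OF x] r unfolding p_def by auto
  have t: "t \<in> tangent_space M p" "(gradf p - t) \<bullet> t = 0"
    using orth_proj_spec[OF subspace_tangent_space[OF p(1)]] unfolding t_def manifold_grad_def by auto
  have normal: "t \<bullet> (x - p) = 0"
    using p(2) t(1) unfolding normal_space_def by (simp add: inner_commute)
  have "0 < r" using le_less_trans[OF norm_ge_zero p(3)] .
  then have K: "0 \<le> (r / tM) / (1 - r / tM)"
    using r reach_pos by (intro divide_nonneg_nonneg) (simp_all add: field_simps)
  have "norm (A (gradf y) - D\<pi> x (gradf y)) \<le> \<epsilon> * norm (gradf y)"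
    by (rule norm_le_onorm_diff[OF A has_derivative_bounded_linear[OF has_derivative_closest_point[OF x_tM]]
          A_close])
  also have "\<dots> \<le> \<epsilon> * C"
    using gradf_bound[OF y] order_trans[OF norm_ge_zero y_close] by (rule mult_left_mono)
  finally have A_close': "norm (A (gradf y) - D\<pi> x (gradf y)) \<le> \<epsilon> * C" .
  have py: "norm (p - y) \<le> \<epsilon>" using y_close by (simp add: p_def norm_minus_commute)
  have "norm (gradf p - gradf y) \<le> L * norm (p - y)"
    by (rule lipschitz_on_normD[OF gradf_lip mem_tube[OF p(1) reach_pos] y])
  also have "\<dots> \<le> L * \<epsilon>" using py lipschitz_on_nonneg[OF gradf_lip] by (rule mult_left_mono)
  finally have "norm (gradf p - gradf y) \<le> L * \<epsilon>" .
  with py \<eta> show ?thesis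
    using projected_gradient_estimate[where A = A and B = "D\<pi> x" and g' = "gradf y" and y = y,
        OF t(2) normal refl G closest_point_derivative_symmetric[OF x_tM] A_close'
        closest_point_derivative_near_identity[OF x r t(1)[unfolded p_def]] K gradf_bound[OF y]]
    unfolding t_def p_def by blast
qed

end

theorem lemma7:
  fixes M :: "'a::euclidean_space set"
    and tM :: real
    and f :: "'a \<Rightarrow> real" and gradf :: "'a \<Rightarrow> 'a"
    and C L \<eta> \<tau> \<epsilon> \<tau>t \<delta> :: real
    and s :: "'a \<Rightarrow> 'a" and s' :: "'a \<Rightarrow> 'a \<Rightarrow>\<^sub>L 'a"
    and xs :: 'a
  assumes M_compact: "compact M"
    and M_manifold: "C2_submanifold M"
    and reach: "is_reach M tM" and reach_pos: "tM > 0"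
    and f_deriv: "\<And>x. (f has_derivative (\<lambda>v. gradf x \<bullet> v)) (at x)"
    and gradf_cont: "continuous_on UNIV gradf"
    and gradf_lip: "\<exists>K. K-lipschitz_on (tube M tM) gradf"
    and C_def: "C = (SUP x\<in>tube M tM. norm (gradf x))"
    and L_def: "L = Inf {K. K-lipschitz_on (tube M tM) gradf}"
    and eta: "\<eta> \<ge> 0"
    and tau: "0 < \<tau>" "\<tau> < tM"
    and eps: "\<epsilon> > 0"
    and s_deriv: "\<And>x. (s has_derivative blinfun_apply (s' x)) (at x)"
    and s'_cont: "continuous_on UNIV s'"
    and s_close: "\<And>x. x \<in> tube M \<tau> \<Longrightarrow> norm (s x - closest_point M x) < \<epsilon>"
    and s'_close: "\<And>x. x \<in> tube M \<tau> \<Longrightarrow>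
          onorm (\<lambda>v. blinfun_apply (s' x) v - frechet_derivative (closest_point M) (at x) v) < \<epsilon>"
    and s_maps: "s ` tube M \<tau> \<subseteq> tube M \<tau>"
    and taut: "0 < \<tau>t" "\<tau>t \<le> \<tau>"
    and delta: "\<delta> > 0"
    and xs_in: "xs \<in> tube M \<tau>t"
    and G_small: "norm (blinfun_apply (s' xs) (gradf (s xs)) + \<eta> *\<^sub>R (xs - s xs)) \<le> \<delta>"
  shows "norm (manifold_grad M gradf (closest_point M xs))
           \<le> 2 * (L + C + \<eta>) * \<epsilon> + 2 * ((\<tau>t / tM) / (1 - \<tau>t / tM)) * C + \<delta>"
proof -
  interpret positive_reach M tM
    using M_compact reach reach_pos by unfold_locales (simp_all add: compact_imp_closed)
  have xs_tau: "xs \<in> tube M \<tau>" using xs_in tube_mono[OF taut(2)] ..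
  then have "s xs \<in> tube M \<tau>" using s_maps by blast
  then have s_xs: "s xs \<in> tube M tM" using tube_mono[OF less_imp_le[OF tau(2)]] ..
  have gradf_bound: "norm (gradf z) \<le> C" if "z \<in> tube M tM" for z
    unfolding C_def using norm_le_SUP_continuous_bounded[OF gradf_cont
        bounded_tube[OF compact_imp_bounded[OF M_compact]] that] .
  have L_lipschitz: "L-lipschitz_on (tube M tM) gradf"
    unfolding L_def by (rule lipschitz_on_Inf[OF gradf_lip])
  define K where "K = (\<tau>t / tM) / (1 - \<tau>t / tM)"
  have "norm (manifold_grad M gradf (closest_point M xs))
      \<le> \<delta> + \<eta> * \<epsilon> + \<epsilon> * C + K * C + L * \<epsilon>"
    unfolding K_def using s_close[OF xs_tau] s'_close[OF xs_tau] tau taut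
    by (intro manifold_grad_estimate[OF xs_in _ s_xs _ blinfun.bounded_linear_right _ gradf_bound
          L_lipschitz eta G_small]) auto
  also have "\<dots> \<le> 2 * (L + C + \<eta>) * \<epsilon> + 2 * K * C + \<delta>"
  proof -
    obtain p where "p \<in> M" using M_nonempty by blast
    then have "0 \<le> C" using gradf_bound[OF mem_tube[OF _ reach_pos]] by (meson norm_ge_zero order_trans)
    moreover have "0 \<le> K" using taut tau unfolding K_def by (intro divide_nonneg_nonneg) auto
    ultimately show ?thesis
      using lipschitz_on_nonneg[OF L_lipschitz] eta eps by (simp add: algebra_simps)
  qed
  finally show ?thesis by (simp add: K_def)
qed

end
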